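(* For real $z<1$, $z\ne0$, \[ -\log(1-z)=\cfrac{2z}{(2-z)-\cfrac{z^2}{3(2-z)-\cfrac{4z^2}{5(2-z)-\cfrac{9z^2}{7(2-z)-\cdots}}}}, \] i.e. the continued fraction with $a(0)=0$, $a(n)=(2n-1)(2-z)$ for $n\ge1$, $b(0)=2z$, $b(n)=-n^2z^2$ for $n\ge1$. Moreover, with $p(n)/q(n)$ its $n$-th convergent, as $n\to\infty$ \[ -\log(1-z)-\frac{p(n)}{q(n)}\sim\frac{2\pi}{\big((1+\sqrt{1-z})^2/z\big)^{2n+1}}. \]
   Context: For sequences $a(n),b(n)$, the continued fraction is $a(0)+\cfrac{b(0)}{a(1)+\cfrac{b(1)}{a(2)+\cdots}}$ and its $n$-th convergent $p(n)/q(n)$ is the truncation ending with $b(n-1)/a(n)$. *)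

theory Defs
  imports Complex_Main "HOL-Library.Landau_Symbols"
begin

text \<open>Numerators and denominators of the convergents of the continued fraction
  a(0) + b(0)/(a(1) + b(1)/(a(2) + ...)), via the standard three-term recurrences,
  so that cf_p a b n / cf_q a b n is the truncation ending with b(n-1)/a(n).\<close>

fun cf_p :: "(nat \<Rightarrow> real) \<Rightarrow> (nat \<Rightarrow> real) \<Rightarrow> nat \<Rightarrow> real" where
  "cf_p a b 0 = a 0"
| "cf_p a b (Suc 0) = a 1 * a 0 + b 0"
| "cf_p a b (Suc (Suc n)) = a (n + 2) * cf_p a b (Suc n) + b (n + 1) * cf_p a b n"

fun cf_q :: "(nat \<Rightarrow> real) \<Rightarrow> (nat \<Rightarrow> real) \<Rightarrow> nat \<Rightarrow> real" where
  "cf_q a b 0 = 1"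
| "cf_q a b (Suc 0) = a 1"
| "cf_q a b (Suc (Suc n)) = a (n + 2) * cf_q a b (Suc n) + b (n + 1) * cf_q a b n"

definition log_cf_a :: "real \<Rightarrow> nat \<Rightarrow> real" where
  "log_cf_a z n = (if n = 0 then 0 else (2 * real n - 1) * (2 - z))"

definition log_cf_b :: "real \<Rightarrow> nat \<Rightarrow> real" where
  "log_cf_b z n = (if n = 0 then 2 * z else - ((real n)^2 * z^2))"

end

(*
  With u = (1 + sqrt (1 - z))^2 and w = (z / u)^2 < 1, the denominators are q(n) = n! u^n R(n), where
  R(n) is the coefficient of x^n in ((1 - x) (1 - w x)) powr (-1/2); Wallis' product and Tannery's
  theorem give R(n) ~ 1 / sqrt (pi (1 - w) n). The remainder -ln (1 - z) q(n) - p(n) satisfies the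
  recurrence of the convergents, hence equals n! z^(2n+1) / 2^n times the integral of
  (1 - s^2)^n / (2 - z - z s)^(n+1) over [-1, 1], which is small compared with q(n): the convergents
  converge. The determinant formula p(n+1) q(n) - p(n) q(n+1) = 2 n!^2 z^(2n+1) then makes consecutive
  convergents differ by 2 (z/u) w^n / ((n+1) R(n) R(n+1)) ~ 2 pi (1 - w) (z/u) w^n, and the tail of
  this almost geometric series gives the asymptotics of the error.
*)

theory Submission
  imports Defs "HOL-Analysis.Analysis" "HOL-Computational_Algebra.Formal_Power_Series" "HOL-Real_Asymp.Real_Asymp"
begin

section \<open>The coefficients of \<open>(1 - x) powr (-1/2)\<close>\<close>

text \<open>\<open>central_binom_ratio n = (2n choose n) / 4^n\<close>.\<close>

fun central_binom_ratio :: "nat \<Rightarrow> real" where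
  "central_binom_ratio 0 = 1"
| "central_binom_ratio (Suc n) = central_binom_ratio n * (2 * real n + 1) / (2 * real n + 2)"

lemma central_binom_ratio_pos: "central_binom_ratio n > 0"
  by (induction n) auto

lemma central_binom_ratio_sq_le: "central_binom_ratio n ^ 2 * (real n + 1) \<le> 1"
proof (induction n)
  case 0
  then show ?case by simp
next
  case (Suc n)
  have "(2 * real n + 1)^2 * (real n + 2) \<le> (real n + 1) * (2 * real n + 2)^2"
    by (simp add: power2_eq_square algebra_simps)
  then have "(2 * real n + 1)^2 * (real n + 2) / (2 * real n + 2)^2 \<le> real n + 1"
    by (simp add: divide_le_eq)
  then have "central_binom_ratio n ^ 2 * ((2 * real n + 1)^2 * (real n + 2) / (2 * real n + 2)^2)
      \<le> central_binom_ratio n ^ 2 * (real n + 1)"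
    by (rule mult_left_mono) simp
  moreover have "central_binom_ratio (Suc n) ^ 2 * (real (Suc n) + 1)
      = central_binom_ratio n ^ 2 * ((2 * real n + 1)^2 * (real n + 2) / (2 * real n + 2)^2)"
    by (simp add: power_divide power_mult_distrib field_simps) (simp add: power2_eq_square algebra_simps)
  ultimately show ?case using Suc by linarith
qed

lemma central_binom_ratio_le_1: "central_binom_ratio n \<le> 1"
proof -
  have "central_binom_ratio n ^ 2 * 1 \<le> central_binom_ratio n ^ 2 * (real n + 1)"
    by (rule mult_left_mono) auto
  then have "central_binom_ratio n ^ 2 \<le> 1"
    using central_binom_ratio_sq_le[of n] by linarith
  then show ?thesis using central_binom_ratio_pos[of n] by (simp add: power_le_one_iff abs_le_square_iff)
qed

lemma central_binom_ratio_ge: "central_binom_ratio n * (real n + 1) \<ge> 1"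
proof (induction n)
  case 0
  then show ?case by simp
next
  case (Suc n)
  have "real n + 1 \<le> (2 * real n + 1) * (real n + 2) / (2 * real n + 2)"
    by (simp add: le_divide_eq algebra_simps)
  then have "central_binom_ratio n * (real n + 1)
      \<le> central_binom_ratio n * ((2 * real n + 1) * (real n + 2) / (2 * real n + 2))"
    using central_binom_ratio_pos[of n] by (intro mult_left_mono) simp_all
  also have "\<dots> = central_binom_ratio (Suc n) * (real (Suc n) + 1)"
    by (simp add: field_simps)
  finally show ?case using Suc by linarith
qed

lemma central_binom_ratio_wallis:
  "central_binom_ratio n ^ 2 * (2 * real n + 1) * (\<Prod>k=1..n. (4 * real k^2) / (4 * real k^2 - 1)) = 1"
proof (induction n)
  case 0
  then show ?case by simp
next
  case (Suc n)
  have ne: "4 * (real n + 1)^2 - 1 \<noteq> 0"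
  proof -
    have "(real n + 1)^2 \<ge> 1" by (simp add: one_le_power)
    then show ?thesis by linarith
  qed
  have step: "(2 * real n + 1) * (2 * real n + 3) * (4 * (real n + 1)^2)
      = (2 * real n + 2)^2 * (4 * (real n + 1)^2 - 1)"
    by (simp add: power2_eq_square algebra_simps)
  have "central_binom_ratio (Suc n) ^ 2 * (2 * real (Suc n) + 1) * (\<Prod>k=1..Suc n. (4 * real k^2) / (4 * real k^2 - 1))
      = central_binom_ratio n ^ 2 * (2 * real n + 1) * (\<Prod>k=1..n. (4 * real k^2) / (4 * real k^2 - 1))
        * ((2 * real n + 1) * (2 * real n + 3) * (4 * (real n + 1)^2)
           / ((2 * real n + 2)^2 * (4 * (real n + 1)^2 - 1)))"
    using ne by (simp add: prod.nat_ivl_Suc' power_divide power_mult_distrib field_simps)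
      (simp add: power2_eq_square algebra_simps)
  also have "\<dots> = 1"
    using Suc.IH ne unfolding step by simp
  finally show ?case .
qed

lemma sqrt_mult_central_binom_ratio_tendsto:
  "(\<lambda>n. sqrt (real n + 1) * central_binom_ratio n) \<longlonglongrightarrow> 1 / sqrt pi"
proof -
  let ?W = "\<lambda>n. \<Prod>k=1..n. (4 * real k^2) / (4 * real k^2 - 1)"
  have eq: "central_binom_ratio n ^ 2 * (real n + 1) = inverse (?W n) * ((real n + 1) / (2 * real n + 1))" for n
  proof -
    have "inverse (?W n) = central_binom_ratio n ^ 2 * (2 * real n + 1)"
      by (rule inverse_unique) (use central_binom_ratio_wallis[of n] in \<open>simp add: mult_ac\<close>)
    then show ?thesis by (simp add: field_simps)
  qed
  have ratio: "(\<lambda>n. (real n + 1) / (2 * real n + 1)) \<longlonglongrightarrow> 1/2"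
    by real_asymp
  have "(\<lambda>n. inverse (?W n) * ((real n + 1) / (2 * real n + 1))) \<longlonglongrightarrow> inverse (pi / 2) * (1 / 2)"
    by (intro tendsto_intros wallis ratio) simp
  then have "(\<lambda>n. sqrt (central_binom_ratio n ^ 2 * (real n + 1))) \<longlonglongrightarrow> sqrt (1 / pi)"
    unfolding eq by (intro tendsto_real_sqrt) simp
  moreover have "sqrt (central_binom_ratio n ^ 2 * (real n + 1)) = sqrt (real n + 1) * central_binom_ratio n" for n
    using central_binom_ratio_pos[of n] by (simp add: real_sqrt_mult)
  ultimately show ?thesis by (simp add: real_sqrt_divide)
qed

section \<open>The coefficients of \<open>((1 - u x) (1 - v x)) powr (-1/2)\<close>\<close>

definition central_binom_fps :: "real \<Rightarrow> real fps" where
  "central_binom_fps u = Abs_fps (\<lambda>j. central_binom_ratio j * u ^ j)"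

definition inv_sqrt_coeff :: "real \<Rightarrow> real \<Rightarrow> nat \<Rightarrow> real" where
  "inv_sqrt_coeff u v n =
     (\<Sum>k=0..n. central_binom_ratio k * v ^ k * (central_binom_ratio (n - k) * u ^ (n - k)))"

lemma inv_sqrt_coeff_eq_fps_nth:
  "inv_sqrt_coeff u v n = fps_nth (central_binom_fps v * central_binom_fps u) n"
  by (simp add: inv_sqrt_coeff_def fps_mult_nth central_binom_fps_def)

text \<open>The differential equation \<open>2 (1 - u X) F' = u F\<close> of \<open>F = (1 - u X) powr (-1/2)\<close>.\<close>

lemma central_binom_fps_deriv:
  "fps_const 2 * fps_deriv (central_binom_fps u)
     = fps_const 2 * (fps_const u * (fps_X * fps_deriv (central_binom_fps u))) + fps_const u * central_binom_fps u"
proof (rule fps_ext)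
  fix n
  have "fps_nth (fps_const 2 * fps_deriv (central_binom_fps u)) n
      = 2 * (real n + 1) * central_binom_ratio (Suc n) * u ^ Suc n"
    by (simp add: central_binom_fps_def del: central_binom_ratio.simps)
  also have "\<dots> = central_binom_ratio n * (2 * real n + 1) * u ^ Suc n"
    by (simp add: field_simps)
  also have "\<dots> = fps_nth (fps_const 2 * (fps_const u * (fps_X * fps_deriv (central_binom_fps u)))
      + fps_const u * central_binom_fps u) n"
    by (cases n) (simp_all add: central_binom_fps_def algebra_simps del: central_binom_ratio.simps)
  finally show "fps_nth (fps_const 2 * fps_deriv (central_binom_fps u)) n
      = fps_nth (fps_const 2 * (fps_const u * (fps_X * fps_deriv (central_binom_fps u)))
          + fps_const u * central_binom_fps u) n" .
qed

lemma inv_sqrt_coeff_rec: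
  "inv_sqrt_coeff u v (n + 2) * (2 * real n + 4) =
     (2 * real n + 3) * (u + v) * inv_sqrt_coeff u v (n + 1) - 2 * (real n + 1) * u * v * inv_sqrt_coeff u v n"
proof -
  define C where "C = central_binom_fps v * central_binom_fps u"
  have ode: "fps_const 2 * fps_deriv C - fps_const (2 * (u + v)) * (fps_X * fps_deriv C)
      + fps_const (2 * u * v) * (fps_X * (fps_X * fps_deriv C))
      = fps_const (u + v) * C - fps_const (2 * u * v) * (fps_X * C)"
  proof -
    have "fps_const (2 * (u + v)) = 2 * (fps_const u + fps_const v)"
      "fps_const (2 * u * v) = 2 * fps_const u * fps_const v"
      "fps_const (u + v) = fps_const u + fps_const v" "fps_const (2::real) = 2"
      by (simp_all add: numeral_fps_const)
    then show ?thesis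
      using central_binom_fps_deriv[of u] central_binom_fps_deriv[of v]
      unfolding C_def fps_deriv_mult by (simp only:) algebra
  qed
  have "fps_nth (fps_const 2 * fps_deriv C - fps_const (2 * (u + v)) * (fps_X * fps_deriv C)
      + fps_const (2 * u * v) * (fps_X * (fps_X * fps_deriv C))) (n + 1)
      = fps_nth (fps_const (u + v) * C - fps_const (2 * u * v) * (fps_X * C)) (n + 1)"
    by (simp only: ode)
  then show ?thesis
    unfolding inv_sqrt_coeff_eq_fps_nth C_def[symmetric] fps_add_nth fps_sub_nth
      fps_mult_left_const_nth fps_X_mult_nth fps_deriv_nth
    by (cases n) (simp add: algebra_simps; linarith)+
qed

lemma inv_sqrt_coeff_1_1: "inv_sqrt_coeff 1 1 n = 1"
proof -
  have "inv_sqrt_coeff 1 1 n = 1 \<and> inv_sqrt_coeff 1 1 (Suc n) = 1"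
  proof (induction n)
    case 0
    then show ?case by (simp add: inv_sqrt_coeff_def)
  next
    case (Suc n)
    then have "inv_sqrt_coeff 1 1 (n + 2) * (2 * real n + 4) = 2 * real n + 4"
      using inv_sqrt_coeff_rec[of 1 1 n] by simp
    then show ?case using Suc by simp
  qed
  then show ?thesis ..
qed

lemma inv_sqrt_coeff_homogeneous:
  assumes "u \<noteq> 0"
  shows "inv_sqrt_coeff u v n = u ^ n * inv_sqrt_coeff 1 (v / u) n"
  unfolding inv_sqrt_coeff_def sum_distrib_left
proof (intro sum.cong refl)
  fix k
  assume "k \<in> {0..n}"
  then have "u ^ n = u ^ k * u ^ (n - k)"
    by (simp add: power_add[symmetric])
  then show "central_binom_ratio k * v ^ k * (central_binom_ratio (n - k) * u ^ (n - k))
      = u ^ n * (central_binom_ratio k * (v / u) ^ k * (central_binom_ratio (n - k) * 1 ^ (n - k)))"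
    using assms by (simp add: power_divide field_simps)
qed

lemma inv_sqrt_coeff_ge_central_binom_ratio:
  assumes "w \<ge> 0"
  shows "inv_sqrt_coeff 1 w n \<ge> central_binom_ratio n"
proof -
  have "0 \<le> (\<Sum>k=Suc 0..n. central_binom_ratio k * w ^ k * (central_binom_ratio (n - k) * 1 ^ (n - k)))"
    using assms central_binom_ratio_pos by (intro sum_nonneg) (simp add: less_imp_le)
  then show ?thesis
    unfolding inv_sqrt_coeff_def by (simp add: sum.atLeast_Suc_atMost)
qed

lemma inv_sqrt_coeff_pos:
  assumes "w \<ge> 0"
  shows "inv_sqrt_coeff 1 w n > 0"
  using inv_sqrt_coeff_ge_central_binom_ratio[OF assms, of n] central_binom_ratio_pos[of n] by linarith

lemma summable_central_binom_ratio_power: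
  assumes "0 \<le> w" "w < 1"
  shows "summable (\<lambda>k. central_binom_ratio k * w ^ k)"
proof (rule summable_comparison_test[OF _ summable_geometric[of w]])
  show "\<exists>N. \<forall>n\<ge>N. norm (central_binom_ratio n * w ^ n) \<le> w ^ n"
    using central_binom_ratio_pos central_binom_ratio_le_1 assms
    by (auto intro!: exI[of _ 0] mult_left_le_one_le simp: abs_mult less_imp_le)
qed (use assms in simp)

text \<open>By the Cauchy product, the coefficients of the square are \<open>inv_sqrt_coeff 1 1 n = 1\<close>.\<close>

lemma central_binom_ratio_suminf_sq:
  assumes "0 \<le> w" "w < 1"
  shows "(\<Sum>k. central_binom_ratio k * w ^ k)^2 = 1 / (1 - w)"
proof -
  let ?a = "\<lambda>k. central_binom_ratio k * w ^ k"
  have abs_summable: "summable (\<lambda>k. norm (?a k))"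
    using summable_central_binom_ratio_power[OF assms] central_binom_ratio_pos assms
    by (simp add: abs_mult less_imp_le)
  have coeff: "(\<Sum>i\<le>k. ?a i * ?a (k - i)) = w ^ k" for k
  proof -
    have "(\<Sum>i\<le>k. ?a i * ?a (k - i)) = w ^ k * inv_sqrt_coeff 1 1 k"
      unfolding inv_sqrt_coeff_def sum_distrib_left atMost_atLeast0
    proof (intro sum.cong refl)
      fix i
      assume "i \<in> {0..k}"
      then have "w ^ k = w ^ i * w ^ (k - i)"
        by (simp add: power_add[symmetric])
      then show "?a i * ?a (k - i) = w ^ k * (central_binom_ratio i * 1 ^ i * (central_binom_ratio (k - i) * 1 ^ (k - i)))"
        by simp
    qed
    then show ?thesis by (simp add: inv_sqrt_coeff_1_1)
  qed
  have "(\<lambda>k. w ^ k) sums ((\<Sum>k. ?a k) * (\<Sum>k. ?a k))"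
    using Cauchy_product_sums[OF abs_summable abs_summable] unfolding coeff .
  moreover have "(\<lambda>k. w ^ k) sums (1 / (1 - w))"
    using geometric_sums[of w] assms by simp
  ultimately show ?thesis
    by (metis power2_eq_square sums_unique2)
qed

lemma sqrt_mult_central_binom_ratio_diff_le:
  assumes "k \<le> n"
  shows "sqrt (real n + 1) * central_binom_ratio (n - k) \<le> real k + 1"
proof (rule power2_le_imp_le)
  define m where "m = n - k"
  have "real n = real k + real m"
    using assms by (simp add: m_def)
  then have "real n + 1 \<le> (real k + 1) * (real m + 1)"
    by (simp add: algebra_simps)
  then have "(real n + 1) * central_binom_ratio m ^ 2 \<le> (real k + 1) * (real m + 1) * central_binom_ratio m ^ 2"
    by (rule mult_right_mono) simp
  then have "(sqrt (real n + 1) * central_binom_ratio m)^2 \<le> (real k + 1) * (central_binom_ratio m ^ 2 * (real m + 1))"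
    by (simp add: power_mult_distrib algebra_simps)
  also have "\<dots> \<le> real k + 1"
    using mult_left_mono[OF central_binom_ratio_sq_le[of m], of "real k + 1"] by simp
  also have "\<dots> \<le> (real k + 1)^2"
    by (simp add: power2_eq_square)
  finally show "(sqrt (real n + 1) * central_binom_ratio (n - k))^2 \<le> (real k + 1)^2"
    by (simp add: m_def)
qed simp

text \<open>Tannery's theorem applied to the convolution defining \<open>inv_sqrt_coeff\<close>: the factor
  \<open>central_binom_ratio (n - k)\<close> behaves like \<open>1 / sqrt (pi n)\<close> for every fixed \<open>k\<close>.\<close>

lemma sqrt_mult_inv_sqrt_coeff_tendsto:
  assumes "0 \<le> w" "w < 1"
  shows "(\<lambda>n. sqrt (real n + 1) * inv_sqrt_coeff 1 w n) \<longlonglongrightarrow> 1 / sqrt (pi * (1 - w))"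
proof -
  define a where "a k n = (if k \<le> n then sqrt (real n + 1) * central_binom_ratio (n - k)
      * (central_binom_ratio k * w ^ k) else 0)" for k n
  have lim: "(\<lambda>n. a k n) \<longlonglongrightarrow> 1 / sqrt pi * (central_binom_ratio k * w ^ k)" for k
  proof -
    have shifted: "(\<lambda>n. sqrt (real (n - k) + 1) * central_binom_ratio (n - k)) \<longlonglongrightarrow> 1 / sqrt pi"
      using filterlim_compose[OF sqrt_mult_central_binom_ratio_tendsto filterlim_minus_const_nat_at_top[of k]]
      by simp
    have ratio: "(\<lambda>n. sqrt (real n + 1) / sqrt (real n - real k + 1)) \<longlonglongrightarrow> 1"
      by real_asymp
    have "(\<lambda>n. sqrt (real n + 1) / sqrt (real n - real k + 1)
        * (sqrt (real (n - k) + 1) * central_binom_ratio (n - k)) * (central_binom_ratio k * w ^ k))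
        \<longlonglongrightarrow> 1 * (1 / sqrt pi) * (central_binom_ratio k * w ^ k)"
      by (intro tendsto_mult ratio shifted tendsto_const)
    moreover have "\<forall>\<^sub>F n in sequentially. sqrt (real n + 1) / sqrt (real n - real k + 1)
        * (sqrt (real (n - k) + 1) * central_binom_ratio (n - k)) * (central_binom_ratio k * w ^ k) = a k n"
      using eventually_ge_at_top[of k]
    proof eventually_elim
      case (elim n)
      then have "sqrt (real (n - k) + 1) = sqrt (real n - real k + 1)"
        by (simp add: of_nat_diff)
      moreover have "sqrt (real n - real k + 1) > 0"
        using elim by simp
      ultimately show ?case
        using elim by (simp add: a_def)
    qed
    ultimately show ?thesis
      by (simp add: Lim_transform_eventually)
  qed
  have bound: "norm (a k n) \<le> (real k + 1) * w ^ k" for k n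
  proof (cases "k \<le> n")
    case True
    have "norm (a k n) = sqrt (real n + 1) * central_binom_ratio (n - k) * (central_binom_ratio k * w ^ k)"
      using True assms central_binom_ratio_pos by (simp add: a_def abs_mult less_imp_le)
    also have "\<dots> \<le> (real k + 1) * (1 * w ^ k)"
      using True assms central_binom_ratio_pos central_binom_ratio_le_1
      by (intro mult_mono sqrt_mult_central_binom_ratio_diff_le mult_right_mono) (auto simp: less_imp_le)
    finally show ?thesis by simp
  qed (use assms in \<open>simp add: a_def\<close>)
  have summable: "summable (\<lambda>k. (real k + 1) * w ^ k)"
    using sums_summable[OF geometric_deriv_sums[of w]] assms by (simp add: add.commute)
  have eventually_bound: "eventually (\<lambda>(k, n). norm (a k n) \<le> (real k + 1) * w ^ k) (at_top \<times>\<^sub>F sequentially)"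
    unfolding case_prod_unfold by (intro always_eventually allI bound)
  have lim_sum: "(\<lambda>n. \<Sum>k. a k n) \<longlonglongrightarrow> (\<Sum>k. 1 / sqrt pi * (central_binom_ratio k * w ^ k))"
    using tannerys_theorem[OF lim eventually_bound summable trivial_limit_sequentially] by (elim conjE)
  have sum_eq: "(\<Sum>k. a k n) = sqrt (real n + 1) * inv_sqrt_coeff 1 w n" for n
  proof -
    have "(\<Sum>k. a k n) = (\<Sum>k=0..n. a k n)"
      by (rule suminf_finite) (auto simp: a_def)
    then show ?thesis
      unfolding inv_sqrt_coeff_def a_def by (simp add: sum_distrib_left mult_ac)
  qed
  have limit_value: "(\<Sum>k. 1 / sqrt pi * (central_binom_ratio k * w ^ k)) = 1 / sqrt (pi * (1 - w))"
  proof -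
    have "0 \<le> (\<Sum>k. central_binom_ratio k * w ^ k)"
      by (intro suminf_nonneg summable_central_binom_ratio_power[OF assms] mult_nonneg_nonneg
          zero_le_power assms(1) less_imp_le[OF central_binom_ratio_pos])
    then have "(\<Sum>k. central_binom_ratio k * w ^ k) = sqrt (1 / (1 - w))"
      using real_sqrt_unique[OF central_binom_ratio_suminf_sq[OF assms]] by simp
    then show ?thesis
      using suminf_mult[OF summable_central_binom_ratio_power[OF assms], of "1 / sqrt pi"]
      by (simp add: real_sqrt_divide real_sqrt_mult)
  qed
  show ?thesis
    using lim_sum unfolding sum_eq limit_value .
qed

lemma inv_sqrt_coeff_consecutive_tendsto:
  assumes "0 \<le> w" "w < 1"
  shows "(\<lambda>k. (real k + 1) * inv_sqrt_coeff 1 w k * inv_sqrt_coeff 1 w (Suc k)) \<longlonglongrightarrow> 1 / (pi * (1 - w))"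
proof -
  let ?g = "\<lambda>n. sqrt (real n + 1) * inv_sqrt_coeff 1 w n"
  have g: "?g \<longlonglongrightarrow> 1 / sqrt (pi * (1 - w))"
    by (rule sqrt_mult_inv_sqrt_coeff_tendsto[OF assms])
  have ratio: "(\<lambda>k. sqrt (real k + 1) / sqrt (real (Suc k) + 1)) \<longlonglongrightarrow> 1"
    by real_asymp
  have lim: "(\<lambda>k. ?g k * ?g (Suc k) * (sqrt (real k + 1) / sqrt (real (Suc k) + 1)))
      \<longlonglongrightarrow> 1 / sqrt (pi * (1 - w)) * (1 / sqrt (pi * (1 - w))) * 1"
    by (intro tendsto_mult g LIMSEQ_Suc[OF g] ratio)
  have eq: "?g k * ?g (Suc k) * (sqrt (real k + 1) / sqrt (real (Suc k) + 1))
      = (real k + 1) * inv_sqrt_coeff 1 w k * inv_sqrt_coeff 1 w (Suc k)" for k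
  proof -
    have "?g k * ?g (Suc k) * (sqrt (real k + 1) / sqrt (real (Suc k) + 1))
        = (sqrt (real k + 1) * sqrt (real k + 1)) * (sqrt (real (Suc k) + 1) / sqrt (real (Suc k) + 1))
          * (inv_sqrt_coeff 1 w k * inv_sqrt_coeff 1 w (Suc k))"
      by (simp only: mult_ac times_divide_eq_left times_divide_eq_right)
    also have "\<dots> = (real k + 1) * inv_sqrt_coeff 1 w k * inv_sqrt_coeff 1 w (Suc k)"
      by simp
    finally show ?thesis .
  qed
  have "1 / sqrt (pi * (1 - w)) * (1 / sqrt (pi * (1 - w))) * 1 = 1 / (pi * (1 - w))"
    using assms by simp
  then show ?thesis
    using lim unfolding eq by simp
qed

lemma cf_p_q_det:
  "cf_p a b (Suc n) * cf_q a b n - cf_p a b n * cf_q a b (Suc n) = (-1) ^ n * (\<Prod>k\<le>n. b k)"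
proof (induction n)
  case 0
  then show ?case by simp
next
  case (Suc n)
  have "cf_p a b (Suc (Suc n)) * cf_q a b (Suc n) - cf_p a b (Suc n) * cf_q a b (Suc (Suc n))
      = - b (Suc n) * (cf_p a b (Suc n) * cf_q a b n - cf_p a b n * cf_q a b (Suc n))"
    by (simp add: algebra_simps)
  then show ?case
    using Suc.IH by simp
qed

lemma second_order_recurrence_unique:
  fixes x y :: "nat \<Rightarrow> 'a"
  assumes "x 0 = y 0" "x 1 = y 1"
    and "\<And>n. x (n + 2) = f n (x (n + 1)) (x n)" "\<And>n. y (n + 2) = f n (y (n + 1)) (y n)"
  shows "x n = y n"
proof -
  have "x n = y n \<and> x (Suc n) = y (Suc n)"
    by (induction n) (use assms in \<open>simp_all add: numeral_2_eq_2\<close>)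
  then show ?thesis ..
qed

abbreviation log_cf_p :: "real \<Rightarrow> nat \<Rightarrow> real" where
  "log_cf_p z \<equiv> cf_p (log_cf_a z) (log_cf_b z)"

abbreviation log_cf_q :: "real \<Rightarrow> nat \<Rightarrow> real" where
  "log_cf_q z \<equiv> cf_q (log_cf_a z) (log_cf_b z)"

lemma log_cf_p_rec:
  "log_cf_p z (n + 2) = (2 * real n + 3) * (2 - z) * log_cf_p z (n + 1) - (real n + 1)^2 * z^2 * log_cf_p z n"
  by (simp add: log_cf_a_def log_cf_b_def algebra_simps)

lemma log_cf_q_rec:
  "log_cf_q z (n + 2) = (2 * real n + 3) * (2 - z) * log_cf_q z (n + 1) - (real n + 1)^2 * z^2 * log_cf_q z n"
  by (simp add: log_cf_a_def log_cf_b_def algebra_simps)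

lemma log_cf_det:
  "log_cf_p z (Suc n) * log_cf_q z n - log_cf_p z n * log_cf_q z (Suc n) = 2 * fact n ^ 2 * z ^ (2 * n + 1)"
proof -
  have "(\<Prod>k\<le>n. log_cf_b z k) = (-1) ^ n * (2 * fact n ^ 2 * z ^ (2 * n + 1))"
    by (induction n) (simp_all add: log_cf_b_def power2_eq_square algebra_simps)
  then show ?thesis
    unfolding cf_p_q_det by simp
qed

text \<open>The recurrence of \<open>log_cf_q\<close> is that of \<open>inv_sqrt_coeff u v\<close>, scaled by \<open>fact n\<close>,
  once \<open>u\<close> and \<open>v\<close> are the roots of \<open>X^2 - 2 (2 - z) X + z^2\<close>.\<close>

lemma log_cf_q_eq_inv_sqrt_coeff:
  assumes "u + v = 2 * (2 - z)" "u * v = z^2"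
  shows "log_cf_q z n = fact n * inv_sqrt_coeff u v n"
proof (rule second_order_recurrence_unique
    [where f = "\<lambda>n x1 x0. (2 * real n + 3) * (2 - z) * x1 - (real n + 1)^2 * z^2 * x0"])
  show "log_cf_q z 0 = fact 0 * inv_sqrt_coeff u v 0" "log_cf_q z 1 = fact 1 * inv_sqrt_coeff u v 1"
    using assms(1) by (simp_all add: inv_sqrt_coeff_def log_cf_a_def)
  show "log_cf_q z (n + 2) = (2 * real n + 3) * (2 - z) * log_cf_q z (n + 1) - (real n + 1)^2 * z^2 * log_cf_q z n" for n
    by (rule log_cf_q_rec)
  fix n
  have rec: "inv_sqrt_coeff u v (n + 2) * (real n + 2) =
      (2 * real n + 3) * (2 - z) * inv_sqrt_coeff u v (n + 1) - (real n + 1) * z^2 * inv_sqrt_coeff u v n"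
    using inv_sqrt_coeff_rec[of u v n] unfolding assms(1) mult.assoc[of _ u v] assms(2)
    by (simp add: algebra_simps)
  have "fact (n + 2) * inv_sqrt_coeff u v (n + 2) = fact (n + 1) * (inv_sqrt_coeff u v (n + 2) * (real n + 2))"
    by (simp add: algebra_simps)
  also have "\<dots> = (2 * real n + 3) * (2 - z) * (fact (n + 1) * inv_sqrt_coeff u v (n + 1))
      - (real n + 1)^2 * z^2 * (fact n * inv_sqrt_coeff u v n)"
    unfolding rec by (simp add: algebra_simps power2_eq_square)
  finally show "fact (n + 2) * inv_sqrt_coeff u v (n + 2) = (2 * real n + 3) * (2 - z) * (fact (n + 1) * inv_sqrt_coeff u v (n + 1))
      - (real n + 1)^2 * z^2 * (fact n * inv_sqrt_coeff u v n)" .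
qed

section \<open>An integral representation of the remainder\<close>

lemma fundamental_theorem_of_calculus_real:
  fixes f f' :: "real \<Rightarrow> real"
  assumes "a \<le> b" "\<And>x. x \<in> {a..b} \<Longrightarrow> (f has_real_derivative f' x) (at x)"
  shows "(f' has_integral (f b - f a)) {a..b}"
  by (rule fundamental_theorem_of_calculus[OF assms(1)])
    (auto simp: has_real_derivative_iff_has_vector_derivative[symmetric] intro!: has_field_derivative_at_within assms(2))

definition log_integrand :: "real \<Rightarrow> nat \<Rightarrow> real \<Rightarrow> real" where
  "log_integrand z n s = ((1 - s^2) / (2 - z - z * s)) ^ n / (2 - z - z * s)"

definition log_integral :: "real \<Rightarrow> nat \<Rightarrow> real" where
  "log_integral z n = integral {-1..1} (log_integrand z n)"

lemma log_denom_ge: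
  fixes z s :: real
  assumes "s \<in> {-1..1}"
  shows "2 - z - \<bar>z\<bar> \<le> 2 - z - z * s"
proof -
  have "z * s \<le> \<bar>z * s\<bar>"
    by (rule abs_ge_self)
  also have "\<dots> = \<bar>z\<bar> * \<bar>s\<bar>"
    by (rule abs_mult)
  also have "\<dots> \<le> \<bar>z\<bar>"
    using assms by (intro mult_left_le) auto
  finally show ?thesis by simp
qed

lemma log_denom_pos:
  fixes z s :: real
  assumes "z < 1" "s \<in> {-1..1}"
  shows "0 < 2 - z - z * s"
  using log_denom_ge[OF assms(2), of z] assms(1) by linarith

lemma log_integrand_has_integral:
  assumes "z < 1"
  shows "(log_integrand z n has_integral log_integral z n) {-1..1}"
proof -
  have "continuous_on {-1..1} (log_integrand z n)"
    unfolding log_integrand_def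
    by (intro continuous_intros) (auto dest: log_denom_pos[OF assms])
  then show ?thesis
    unfolding log_integral_def by (intro integrable_integral integrable_continuous_interval)
qed

lemma log_integral_0:
  assumes "z < 1" "z \<noteq> 0"
  shows "log_integral z 0 = - ln (1 - z) / z"
proof -
  let ?F = "\<lambda>s. - ln (2 - z - z * s) / z"
  have "(?F has_real_derivative log_integrand z 0 s) (at s)" if "s \<in> {-1..1}" for s
  proof -
    have "0 < 2 - z - z * s"
      by (rule log_denom_pos[OF assms(1) that])
    then have "(?F has_real_derivative - (1 / (2 - z - z * s) * (0 - (0 + z * 1))) / z) (at s)"
      using assms(2) by (intro derivative_eq_intros) auto
    then show ?thesis
      using assms(2) by (simp add: log_integrand_def)
  qed
  then have ftc: "(log_integrand z 0 has_integral (?F 1 - ?F (-1))) {-1..1}"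
    by (intro fundamental_theorem_of_calculus_real) auto
  have "?F 1 - ?F (-1) = - ln (1 - z) / z"
  proof -
    have "ln (2 - z - z * 1) = ln 2 + ln (1 - z)"
      using assms ln_mult[of 2 "1 - z"] by simp
    then show ?thesis
      using assms(2) by (simp add: field_simps)
  qed
  then show ?thesis
    using has_integral_unique[OF log_integrand_has_integral[OF assms(1)] ftc] by simp
qed

text \<open>An antiderivative of a combination of three consecutive integrands; evaluated at \<open>s = \<plusminus>1\<close>
  it gives the three-term recurrence of \<open>log_integral\<close>.\<close>

definition log_antideriv :: "real \<Rightarrow> nat \<Rightarrow> real \<Rightarrow> real" where
  "log_antideriv z m s =
     ((1 - s^2) / (2 - z - z * s)) ^ m * ((z + z * s^2 - 2 * (2 - z) * s) / (2 - z - z * s))"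

lemma log_antideriv_has_real_derivative:
  assumes "2 - z - z * s \<noteq> 0"
  shows "(log_antideriv z m has_real_derivative
      (real m + 1) * z^2 * log_integrand z (m + 1) s - 2 * (2 * real m + 1) * (2 - z) * log_integrand z m s
        + 4 * real m * log_integrand z (m - 1) s) (at s)"
proof -
  define D where "D = 2 - z - z * s"
  define P where "P = z + z * s^2 - 2 * (2 - z) * s"
  define g where "g = (1 - s^2) / D"
  define g' where "g' = (z * (1 - s^2) - 2 * s * D) / D^2"
  define h' where "h' = (z^2 * g - 2 * (2 - z)) / D"
  have D: "D \<noteq> 0"
    using assms by (simp add: D_def)
  have d_num_g: "((\<lambda>s. 1 - s^2) has_real_derivative - 2 * s) (at s)"
    and d_denom: "((\<lambda>s. 2 - z - z * s) has_real_derivative - z) (at s)"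
    and d_num_h: "((\<lambda>s. z + z * s^2 - 2 * (2 - z) * s) has_real_derivative 2 * z * s - 2 * (2 - z)) (at s)"
    by (auto intro!: derivative_eq_intros)
  from DERIV_divide[OF d_num_g d_denom assms] have dg: "((\<lambda>s. (1 - s^2) / (2 - z - z * s)) has_real_derivative g') (at s)"
    by (simp add: g'_def D_def power2_eq_square algebra_simps)
  from DERIV_divide[OF d_num_h d_denom assms] have dh: "((\<lambda>s. (z + z * s^2 - 2 * (2 - z) * s) / (2 - z - z * s)) has_real_derivative h') (at s)"
  proof (rule DERIV_cong)
    have "(2 * z * s - 2 * (2 - z)) * D - P * - z = z^2 * (1 - s^2) - 2 * (2 - z) * D"
      by (simp add: D_def P_def algebra_simps power2_eq_square)
    then show "((2 * z * s - 2 * (2 - z)) * (2 - z - z * s) - (z + z * s^2 - 2 * (2 - z) * s) * - z)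
        / ((2 - z - z * s) * (2 - z - z * s)) = h'"
      using D unfolding h'_def g_def D_def[symmetric] P_def[symmetric] by (simp add: field_simps power2_eq_square)
  qed
  have poly: "(z * (1 - s^2) - 2 * s * D) * P = z^2 * (1 - s^2)^2 - 4 * (2 - z) * (1 - s^2) * D + 4 * D^2"
    by (simp add: D_def P_def algebra_simps power2_eq_square)
  have "g' * (P / D) = ((z * (1 - s^2) - 2 * s * D) * P) / D^3"
    unfolding g'_def by (simp add: power2_eq_square power3_eq_cube)
  also have "\<dots> = (z^2 * g^2 - 4 * (2 - z) * g + 4) / D"
    unfolding poly g_def using D by (simp add: field_simps power2_eq_square power3_eq_cube)
  finally have g'h: "g' * (P / D) = (z^2 * g^2 - 4 * (2 - z) * g + 4) / D" .
  have "(log_antideriv z m has_real_derivative real m * g' * g ^ (m - 1) * (P / D) + g ^ m * h') (at s)"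
    using DERIV_mult[OF DERIV_power[OF dg, of m] dh]
    unfolding log_antideriv_def D_def[symmetric] P_def[symmetric] g_def[symmetric] by (simp add: mult_ac)
  moreover have "real m * g' * g ^ (m - 1) * (P / D) + g ^ m * h'
      = (real m + 1) * z^2 * log_integrand z (m + 1) s - 2 * (2 * real m + 1) * (2 - z) * log_integrand z m s
        + 4 * real m * log_integrand z (m - 1) s"
  proof (cases m)
    case 0
    then show ?thesis
      unfolding log_integrand_def D_def[symmetric] g_def[symmetric] h'_def using D by (simp add: field_simps)
  next
    case (Suc k)
    have "real m * g' * g ^ (m - 1) * (P / D) + g ^ m * h' = g ^ k * ((real k + 1) * (g' * (P / D)) + g * h')"
      using Suc by (simp add: algebra_simps add_divide_distrib)
    also have "\<dots> = g ^ k * ((real k + 1) * ((z^2 * g^2 - 4 * (2 - z) * g + 4) / D) + g * h')"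
      by (simp only: g'h)
    also have "\<dots> = (real m + 1) * z^2 * log_integrand z (m + 1) s
        - 2 * (2 * real m + 1) * (2 - z) * log_integrand z m s + 4 * real m * log_integrand z (m - 1) s"
      unfolding log_integrand_def D_def[symmetric] g_def[symmetric] h'_def using Suc D
      by (simp add: field_simps power2_eq_square)
    finally show ?thesis .
  qed
  ultimately show ?thesis
    by simp
qed

lemma log_integral_rec:
  assumes "z < 1"
  shows "(real m + 1) * z^2 * log_integral z (m + 1) - 2 * (2 * real m + 1) * (2 - z) * log_integral z m
      + 4 * real m * log_integral z (m - 1) = (if m = 0 then -4 else 0)"
proof -
  let ?f = "\<lambda>s. (real m + 1) * z^2 * log_integrand z (m + 1) s - 2 * (2 * real m + 1) * (2 - z) * log_integrand z m s
      + 4 * real m * log_integrand z (m - 1) s"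
  have "(log_antideriv z m has_real_derivative ?f s) (at s)" if "s \<in> {-1..1}" for s
  proof (rule log_antideriv_has_real_derivative)
    show "2 - z - z * s \<noteq> 0"
      using log_denom_pos[OF assms that] by simp
  qed
  then have ftc: "(?f has_integral (log_antideriv z m 1 - log_antideriv z m (-1))) {-1..1}"
    by (intro fundamental_theorem_of_calculus_real) auto
  have combination: "(?f has_integral ((real m + 1) * z^2 * log_integral z (m + 1)
      - 2 * (2 * real m + 1) * (2 - z) * log_integral z m + 4 * real m * log_integral z (m - 1))) {-1..1}"
    by (intro has_integral_add has_integral_diff has_integral_mult_right log_integrand_has_integral assms)
  have boundary: "log_antideriv z m 1 - log_antideriv z m (-1) = (if m = 0 then -4 else 0)"
  proof -
    have "(z + z * 1^2 - 2 * (2 - z) * 1) / (2 - z - z * 1) = -2"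
      using assms by (simp add: field_simps)
    moreover have "(z + z * (-1)^2 - 2 * (2 - z) * (-1)) / (2 - z - z * (-1)) = 2"
      by simp
    ultimately show ?thesis
      by (simp add: log_antideriv_def)
  qed
  show ?thesis
    using has_integral_unique[OF combination ftc] boundary by simp
qed

lemma log_integral_nonneg:
  assumes "z < 1"
  shows "0 \<le> log_integral z n"
  unfolding log_integral_def
proof (rule integral_nonneg)
  show "log_integrand z n integrable_on {-1..1}"
    using log_integrand_has_integral[OF assms] by blast
  fix s :: real
  assume s: "s \<in> {-1..1}"
  then have "\<bar>s\<bar> \<le> 1"
    by auto
  then have "s^2 \<le> 1"
    by (simp add: abs_square_le_1)
  then show "0 \<le> log_integrand z n s"
    using log_denom_pos[OF assms s] by (simp add: log_integrand_def)
qed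

text \<open>With \<open>z = 1 - S^2\<close>, the identity \<open>2 (2 - z - z s) - (1 + S)^2 (1 - s^2) = ((1 + S) s - (1 - S))^2\<close>
  bounds the kernel \<open>(1 - s^2) / (2 - z - z s)\<close> by \<open>2 / (1 + S)^2\<close>.\<close>

lemma log_integral_le:
  assumes "z < 1" "0 \<le> S" "S^2 = 1 - z"
  shows "log_integral z n \<le> 2 * (2 / (1 + S)^2) ^ n / (2 - z - \<bar>z\<bar>)"
proof -
  define u where "u = (1 + S)^2"
  have u: "0 < u"
    using assms(2) by (simp add: u_def)
  have bound: "log_integrand z n s \<le> (2 / u) ^ n * (1 / (2 - z - \<bar>z\<bar>))" if s: "s \<in> {-1..1}" for s
  proof -
    have D: "0 < 2 - z - z * s"
      by (rule log_denom_pos[OF assms(1) s])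
    have z: "z = 1 - S^2"
      using assms(3) by simp
    have "2 * (2 - z - z * s) - u * (1 - s^2) = ((1 + S) * s - (1 - S))^2"
      unfolding u_def z by (simp add: algebra_simps power2_eq_square)
    moreover have "0 \<le> ((1 + S) * s - (1 - S))^2"
      by simp
    ultimately have "u * (1 - s^2) \<le> 2 * (2 - z - z * s)"
      by linarith
    then have kernel: "(1 - s^2) / (2 - z - z * s) \<le> 2 / u"
      using D u by (simp add: pos_divide_le_eq pos_le_divide_eq mult.commute)
    have "\<bar>s\<bar> \<le> 1"
      using s by auto
    then have "0 \<le> 1 - s^2"
      by (simp add: abs_square_le_1)
    then have kernel_nonneg: "0 \<le> (1 - s^2) / (2 - z - z * s)"
      using D by simp
    then have power_le: "((1 - s^2) / (2 - z - z * s)) ^ n \<le> (2 / u) ^ n"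
      by (intro power_mono kernel)
    have inverse_le: "1 / (2 - z - z * s) \<le> 1 / (2 - z - \<bar>z\<bar>)"
    proof (rule divide_left_mono)
      have "0 < 2 - z - \<bar>z\<bar>"
        using assms(1) by linarith
      then show "0 < (2 - z - z * s) * (2 - z - \<bar>z\<bar>)"
        using D by (rule mult_pos_pos[rotated])
    qed (use log_denom_ge[OF s, of z] in simp_all)
    have "((1 - s^2) / (2 - z - z * s)) ^ n * (1 / (2 - z - z * s)) \<le> (2 / u) ^ n * (1 / (2 - z - \<bar>z\<bar>))"
      using power_le inverse_le D u by (intro mult_mono) simp_all
    then show ?thesis
      by (simp add: log_integrand_def)
  qed
  have "((\<lambda>s::real. (2 / u) ^ n * (1 / (2 - z - \<bar>z\<bar>))) has_integral 2 * ((2 / u) ^ n * (1 / (2 - z - \<bar>z\<bar>)))) {-1..1}"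
    using has_integral_const_real[of "(2 / u) ^ n * (1 / (2 - z - \<bar>z\<bar>))" "-1" 1] by simp
  then have "log_integral z n \<le> 2 * ((2 / u) ^ n * (1 / (2 - z - \<bar>z\<bar>)))"
    by (rule has_integral_le[OF log_integrand_has_integral[OF assms(1)]]) (rule bound)
  then show ?thesis
    by (simp add: u_def)
qed

definition log_cf_remainder :: "real \<Rightarrow> nat \<Rightarrow> real" where
  "log_cf_remainder z n = fact n * z ^ (2 * n + 1) / 2 ^ n * log_integral z n"

lemma log_cf_remainder_rec:
  assumes "z < 1"
  shows "log_cf_remainder z (n + 2) =
    (2 * real n + 3) * (2 - z) * log_cf_remainder z (n + 1) - (real n + 1)^2 * z^2 * log_cf_remainder z n"
proof -
  define c where "c = fact n * z ^ (2 * n + 1) / 2 ^ n"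
  have rec: "(real n + 2) * z^2 * log_integral z (n + 2)
      = 2 * (2 * real n + 3) * (2 - z) * log_integral z (n + 1) - 4 * (real n + 1) * log_integral z n"
    using log_integral_rec[OF assms, of "n + 1"] by (simp add: algebra_simps)
  have exponents: "2 * (n + 2) + 1 = (2 * n + 1) + 2 + 2" "2 * (n + 1) + 1 = (2 * n + 1) + 2"
    by simp_all
  have "fact (n + 2) = (real n + 2) * (real n + 1) * fact n" "fact (n + 1) = (real n + 1) * fact n"
    by (simp_all add: algebra_simps)
  then have remainders:
    "log_cf_remainder z (n + 2) = c * (real n + 1) * z^2 / 4 * ((real n + 2) * z^2 * log_integral z (n + 2))"
    "log_cf_remainder z (n + 1) = c * (real n + 1) * z^2 / 2 * log_integral z (n + 1)"
    "log_cf_remainder z n = c * log_integral z n"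
    unfolding log_cf_remainder_def c_def exponents power_add by (simp_all add: field_simps)
  show ?thesis
    unfolding remainders rec by (simp add: field_simps power2_eq_square)
qed

lemma log_cf_remainder_eq:
  assumes "z < 1" "z \<noteq> 0"
  shows "- ln (1 - z) * log_cf_q z n - log_cf_p z n = log_cf_remainder z n"
proof (rule second_order_recurrence_unique
    [where f = "\<lambda>n x1 x0. (2 * real n + 3) * (2 - z) * x1 - (real n + 1)^2 * z^2 * x0"])
  have F0: "z * log_integral z 0 = - ln (1 - z)"
    using log_integral_0[OF assms] assms(2) by simp
  then show "- ln (1 - z) * log_cf_q z 0 - log_cf_p z 0 = log_cf_remainder z 0"
    by (simp add: log_cf_remainder_def log_cf_a_def)
  have "log_cf_remainder z 1 = z / 2 * (z^2 * log_integral z 1)"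
    by (simp add: log_cf_remainder_def power_numeral_reduce)
  also have "\<dots> = z / 2 * (2 * (2 - z) * log_integral z 0 - 4)"
    using log_integral_rec[OF assms(1), of 0] by simp
  also have "\<dots> = (2 - z) * (z * log_integral z 0) - 2 * z"
    by (simp add: algebra_simps)
  finally show "- ln (1 - z) * log_cf_q z 1 - log_cf_p z 1 = log_cf_remainder z 1"
    unfolding F0 by (simp add: log_cf_a_def log_cf_b_def)
  show "- ln (1 - z) * log_cf_q z (n + 2) - log_cf_p z (n + 2) = (2 * real n + 3) * (2 - z)
      * (- ln (1 - z) * log_cf_q z (n + 1) - log_cf_p z (n + 1)) - (real n + 1)^2 * z^2 * (- ln (1 - z) * log_cf_q z n - log_cf_p z n)" for n
    unfolding log_cf_p_rec log_cf_q_rec by (simp add: algebra_simps)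
qed (rule log_cf_remainder_rec[OF assms(1)])

text \<open>Telescoping: \<open>L - x n\<close> is the tail sum of the increments, and after division by \<open>r ^ n\<close>
  Tannery's theorem lets the factors \<open>\<theta> (j + n)\<close> be replaced by their limit.\<close>

lemma tail_asymp_equiv_geometric:
  fixes x \<theta> :: "nat \<Rightarrow> real"
  assumes lim: "x \<longlonglongrightarrow> L" and step: "\<And>k. x (Suc k) - x k = c * r ^ k * \<theta> k"
    and \<theta>: "\<theta> \<longlonglongrightarrow> t" and r: "0 < r" "r < 1" and "c * t \<noteq> 0"
  shows "(\<lambda>n. L - x n) \<sim>[at_top] (\<lambda>n. c * t * r ^ n / (1 - r))"
proof (rule asymp_equivI')
  have c: "c \<noteq> 0"
    using assms(6) by simp
  have tail: "(\<lambda>j. r ^ j * \<theta> (j + n)) sums ((L - x n) / (c * r ^ n))" for n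
  proof -
    have "(\<lambda>j. x (Suc j + n) - x (j + n)) sums (L - x (0 + n))"
      by (rule telescope_sums[OF LIMSEQ_ignore_initial_segment[OF lim]])
    then have "(\<lambda>j. c * r ^ n * (r ^ j * \<theta> (j + n))) sums (L - x n)"
      by (simp add: step power_add mult_ac)
    then have "(\<lambda>j. 1 / (c * r ^ n) * (c * r ^ n * (r ^ j * \<theta> (j + n)))) sums (1 / (c * r ^ n) * (L - x n))"
      by (rule sums_mult)
    then show ?thesis
      using c r by simp
  qed
  obtain B where "B > 0" and B: "\<And>k. norm (\<theta> k) \<le> B"
    using convergent_imp_Bseq[OF convergentI[OF \<theta>]] by (auto elim: BseqE)
  have "(\<lambda>n. \<Sum>j. r ^ j * \<theta> (j + n)) \<longlonglongrightarrow> (\<Sum>j. r ^ j * t)"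
  proof (rule tannerys_theorem[THEN conjunct2, THEN conjunct2])
    show "(\<lambda>n. r ^ j * \<theta> (j + n)) \<longlonglongrightarrow> r ^ j * t" for j
      using LIMSEQ_ignore_initial_segment[OF \<theta>, of j] by (intro tendsto_mult_left) (simp add: add.commute)
    show "\<forall>\<^sub>F (j, n) in sequentially \<times>\<^sub>F sequentially. norm (r ^ j * \<theta> (j + n)) \<le> B * r ^ j"
      using B r by (intro always_eventually) (auto simp: abs_mult mult.commute intro: mult_left_mono)
    show "summable (\<lambda>j. B * r ^ j)"
      using r by (intro summable_mult summable_geometric) simp
  qed simp
  moreover have "(\<Sum>j. r ^ j * t) = t / (1 - r)"
    using suminf_geometric[of r] r suminf_mult2[OF summable_geometric[of r]] by simp
  ultimately have "(\<lambda>n. (1 - r) / t * ((L - x n) / (c * r ^ n))) \<longlonglongrightarrow> (1 - r) / t * (t / (1 - r))"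
    unfolding sums_unique[OF tail, symmetric] by (intro tendsto_mult_left) simp
  then show "(\<lambda>n. (L - x n) / (c * t * r ^ n / (1 - r))) \<longlonglongrightarrow> 1"
    using assms(6) r by (simp add: field_simps)
qed

locale log_cf_point =
  fixes z :: real
  assumes z_lt_1: "z < 1" and z_ne_0: "z \<noteq> 0"
begin

definition t :: real where "t = sqrt (1 - z)"

definition u :: real where "u = (1 + t)^2"

definition w :: real where "w = (1 - t)^2 / (1 + t)^2"

abbreviation R :: "nat \<Rightarrow> real" where "R \<equiv> inv_sqrt_coeff 1 w"

lemma t_pos: "0 < t"
  using z_lt_1 by (simp add: t_def)

lemma t_sq: "t^2 = 1 - z"
  using z_lt_1 by (simp add: t_def)

lemma t_factorization: "(1 - t) * (1 + t) = z"
  using t_sq by (simp add: algebra_simps power2_eq_square)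

lemma u_pos: "0 < u"
  using t_pos by (simp add: u_def)

lemma w_pos: "0 < w"
proof -
  have "t \<noteq> 1"
  proof
    assume "t = 1"
    then have "(1 - t) * (1 + t) = 0"
      by simp
    then show False
      using t_factorization z_ne_0 by simp
  qed
  then show ?thesis
    using t_pos by (simp add: w_def)
qed

lemma w_less_1: "w < 1"
proof -
  have "(1 - t)^2 < (1 + t)^2"
    using t_pos by (simp add: power2_eq_square algebra_simps)
  then show ?thesis
    using t_pos by (simp add: w_def)
qed

lemma z_div_u_sq: "(z / u)^2 = w"
proof -
  have "z / u = (1 - t) * (1 + t) / (1 + t)^2"
    by (simp only: t_factorization u_def)
  also have "\<dots> = (1 - t) / (1 + t)"
    using t_pos by (simp add: power2_eq_square)
  finally have "z / u = (1 - t) / (1 + t)" .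
  then show ?thesis
    by (simp add: w_def power_divide)
qed

lemma log_cf_q_eq: "log_cf_q z n = fact n * (u ^ n * R n)"
proof -
  have "log_cf_q z n = fact n * inv_sqrt_coeff u (u * w) n"
  proof (rule log_cf_q_eq_inv_sqrt_coeff)
    have "u * w = (1 - t)^2"
      using t_pos by (simp add: u_def w_def)
    moreover have "(1 + t)^2 + (1 - t)^2 = 2 + 2 * t^2"
      by (simp add: power2_eq_square algebra_simps)
    ultimately show "u + u * w = 2 * (2 - z)"
      unfolding t_sq by (simp add: u_def)
    have "u * (u * w) = ((1 - t) * (1 + t))^2"
      using \<open>u * w = (1 - t)^2\<close> by (simp add: u_def power_mult_distrib)
    then show "u * (u * w) = z^2"
      by (simp only: t_factorization)
  qed
  also have "\<dots> = fact n * (u ^ n * R n)"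
    using u_pos inv_sqrt_coeff_homogeneous[of u "u * w" n] by simp
  finally show ?thesis .
qed

lemma R_pos: "0 < R n"
  using w_pos by (intro inv_sqrt_coeff_pos) simp

lemma log_cf_q_pos: "0 < log_cf_q z n"
  unfolding log_cf_q_eq using R_pos u_pos by simp

lemma log_cf_remainder_ratio_le:
  "\<bar>log_cf_remainder z n / log_cf_q z n\<bar> \<le> 2 * \<bar>z\<bar> / (2 - z - \<bar>z\<bar>) * ((real n + 1) * w ^ n)"
proof -
  define F where "F = log_integral z n"
  have F_nonneg: "0 \<le> F"
    unfolding F_def by (rule log_integral_nonneg[OF z_lt_1])
  have "F \<le> 2 * (2 / u) ^ n / (2 - z - \<bar>z\<bar>)"
    unfolding F_def u_def using log_integral_le[OF z_lt_1 less_imp_le[OF t_pos] t_sq] .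
  then have F_le: "F / (2 / u) ^ n \<le> 2 / (2 - z - \<bar>z\<bar>)"
    using u_pos by (simp add: pos_divide_le_eq mult.commute)
  have "1 \<le> central_binom_ratio n * (real n + 1)"
    by (rule central_binom_ratio_ge)
  also have "\<dots> \<le> R n * (real n + 1)"
    using w_pos inv_sqrt_coeff_ge_central_binom_ratio[of w n] by (intro mult_right_mono) simp_all
  finally have R_inv_le: "1 / R n \<le> real n + 1"
    using R_pos[of n] by (simp add: divide_le_eq mult.commute)
  have w_pow: "w ^ n = (z^2) ^ n / (u ^ n * u ^ n)"
    unfolding z_div_u_sq[symmetric] by (simp add: power_divide power_mult_distrib power2_eq_square)
  have z_pow: "z ^ (2 * n + 1) = z * (z^2) ^ n"
    by (simp add: power_mult)
  have "log_cf_remainder z n / log_cf_q z n = z * w ^ n * (F / (2 / u) ^ n) * (1 / R n)"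
    unfolding log_cf_remainder_def log_cf_q_eq F_def[symmetric] w_pow z_pow
    using u_pos R_pos[of n] by (simp add: power_divide field_simps)
  then have "\<bar>log_cf_remainder z n / log_cf_q z n\<bar> = \<bar>z\<bar> * w ^ n * (F / (2 / u) ^ n) * (1 / R n)"
    using w_pos u_pos R_pos[of n] F_nonneg by (simp add: abs_mult)
  also have "\<dots> \<le> \<bar>z\<bar> * w ^ n * (2 / (2 - z - \<bar>z\<bar>)) * (real n + 1)"
    using F_le R_inv_le w_pos u_pos R_pos[of n] F_nonneg z_lt_1
    by (intro mult_mono) simp_all
  finally show ?thesis
    by (simp add: field_simps)
qed

lemma log_cf_convergents_tendsto: "(\<lambda>n. log_cf_p z n / log_cf_q z n) \<longlonglongrightarrow> - ln (1 - z)"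
proof -
  have "(\<lambda>n. log_cf_remainder z n / log_cf_q z n) \<longlonglongrightarrow> 0"
  proof (rule Lim_null_comparison)
    show "\<forall>\<^sub>F n in sequentially. norm (log_cf_remainder z n / log_cf_q z n)
        \<le> 2 * \<bar>z\<bar> / (2 - z - \<bar>z\<bar>) * ((real n + 1) * w ^ n)"
      using log_cf_remainder_ratio_le by simp
    have "(\<lambda>n. 2 * \<bar>z\<bar> / (2 - z - \<bar>z\<bar>) * (real n * w ^ n + w ^ n)) \<longlonglongrightarrow> 2 * \<bar>z\<bar> / (2 - z - \<bar>z\<bar>) * (0 + 0)"
      using w_pos w_less_1
      by (intro tendsto_mult tendsto_const tendsto_add powser_times_n_limit_0 LIMSEQ_power_zero) simp_all
    then show "(\<lambda>n. 2 * \<bar>z\<bar> / (2 - z - \<bar>z\<bar>) * ((real n + 1) * w ^ n)) \<longlonglongrightarrow> 0"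
      by (simp add: algebra_simps)
  qed
  moreover have "log_cf_p z n / log_cf_q z n = - ln (1 - z) - log_cf_remainder z n / log_cf_q z n" for n
    using log_cf_remainder_eq[OF z_lt_1 z_ne_0, of n] log_cf_q_pos[of n] by (simp add: field_simps)
  ultimately show ?thesis
    using tendsto_diff[OF tendsto_const[of "- ln (1 - z)"]] by fastforce
qed

lemma log_cf_convergent_step:
  "log_cf_p z (Suc k) / log_cf_q z (Suc k) - log_cf_p z k / log_cf_q z k
     = 2 * z / u * w ^ k * (1 / ((real k + 1) * R k * R (Suc k)))"
proof -
  have "log_cf_p z (Suc k) / log_cf_q z (Suc k) - log_cf_p z k / log_cf_q z k
      = 2 * fact k ^ 2 * z ^ (2 * k + 1) / (log_cf_q z k * log_cf_q z (Suc k))"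
    using log_cf_q_pos[of k] log_cf_q_pos[of "Suc k"] log_cf_det[of z k]
    by (simp add: field_simps)
  also have "\<dots> = 2 * (z / u) ^ (2 * k + 1) / ((real k + 1) * R k * R (Suc k))"
  proof -
    have u_pow: "u ^ (2 * k + 1) = u ^ k * (u ^ k * u)"
      by (simp add: mult_2 power_add)
    have "log_cf_q z k * log_cf_q z (Suc k) = fact k ^ 2 * (u ^ (2 * k + 1) * ((real k + 1) * R k * R (Suc k)))"
      unfolding log_cf_q_eq u_pow by (simp add: power2_eq_square algebra_simps)
    then show ?thesis
      by (simp add: power_divide)
  qed
  also have "\<dots> = 2 * z / u * w ^ k * (1 / ((real k + 1) * R k * R (Suc k)))"
    unfolding z_div_u_sq[symmetric] by (simp add: power_mult[symmetric] mult_ac)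
  finally show ?thesis .
qed

lemma log_cf_remainder_asymp_equiv:
  "(\<lambda>n. - ln (1 - z) - log_cf_p z n / log_cf_q z n)
     \<sim>[at_top] (\<lambda>n. 2 * pi / (((1 + sqrt (1 - z))^2 / z) ^ (2 * n + 1)))"
proof -
  have "(\<lambda>k. 1 / ((real k + 1) * R k * R (Suc k))) \<longlonglongrightarrow> 1 / (1 / (pi * (1 - w)))"
    using w_pos w_less_1 by (intro tendsto_divide tendsto_const inv_sqrt_coeff_consecutive_tendsto) simp_all
  then have "(\<lambda>k. 1 / ((real k + 1) * R k * R (Suc k))) \<longlonglongrightarrow> pi * (1 - w)"
    by simp
  then have "(\<lambda>n. - ln (1 - z) - log_cf_p z n / log_cf_q z n)
      \<sim>[at_top] (\<lambda>n. 2 * z / u * (pi * (1 - w)) * w ^ n / (1 - w))"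
    by (rule tail_asymp_equiv_geometric[OF log_cf_convergents_tendsto log_cf_convergent_step _ w_pos w_less_1])
      (use u_pos z_ne_0 w_less_1 in simp)
  moreover have "2 * z / u * (pi * (1 - w)) * w ^ n / (1 - w)
      = 2 * pi / (((1 + sqrt (1 - z))^2 / z) ^ (2 * n + 1))" for n
  proof -
    have "((1 + sqrt (1 - z))^2 / z) ^ (2 * n + 1) = 1 / ((z / u) * w ^ n)"
      unfolding z_div_u_sq[symmetric] u_def t_def
      by (simp add: power_mult[symmetric] power_divide field_simps)
    then show ?thesis
      using w_less_1 u_pos by (simp add: field_simps)
  qed
  ultimately show ?thesis
    by simp
qed

end

theorem theorem7p1:
  fixes z :: real
  assumes "z < 1" and "z \<noteq> 0"
  shows "((\<lambda>n. cf_p (log_cf_a z) (log_cf_b z) n / cf_q (log_cf_a z) (log_cf_b z) n)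
           \<longlonglongrightarrow> - ln (1 - z) \<and>
         (\<lambda>n. - ln (1 - z) - cf_p (log_cf_a z) (log_cf_b z) n / cf_q (log_cf_a z) (log_cf_b z) n)
           \<sim>[at_top] (\<lambda>n. 2 * pi / (((1 + sqrt (1 - z))^2 / z) ^ (2 * n + 1))))"
proof -
  interpret log_cf_point z
    using assms by unfold_locales
  show ?thesis
    using log_cf_convergents_tendsto log_cf_remainder_asymp_equiv by blast
qed

end
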